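(* Let $\iota:R\to S$ be a ring morphism such that $S$ is locally projective as a left $R$-module, and let $\mathcal C=S\otimes_RS$ be the Sweedler $S$-coring, with $\Delta(s\otimes_R s')=(s\otimes_R1)\otimes_S(1\otimes_Rs')$ and $\varepsilon(s\otimes_Rs')=ss'$. Then $\mathrm{Rat}^{\mathcal C}({}^*\mathcal C)$ is dense in ${}^*\mathcal C$ in the finite topology, and hence the functor $\mathrm{Rat}^{\mathcal C}$ from right ${}^*\mathcal C$-modules to right $\mathcal C$-comodules is exact.
   Context: For a ring $A$ and an $A$-coring $\mathcal C$ (an $A$-bimodule with coassociative counital bimodule maps $\Delta:\mathcal C\to\mathcal C\otimes_A\mathcal C$, $\varepsilon:\mathcal C\to A$, $\Delta(c)=c_{(1)}\otimes c_{(2)}$), ${}^*\mathcal C={}_A\mathrm{Hom}(\mathcal C,A)$ is a ring with product $(f\#g)(c)=g(c_{(1)}f(c_{(2)}))$. Here $A=S$, and ${}^*\mathcal C\cong{}_R\mathrm{End}(S)$ with multiplication the opposite composition (via $\varphi\mapsto(s\mapsto\varphi(1\otimes_Rs))$). Right $\mathcal C$-comodules (coactions $n\mapsto n_{[0]}\otimes n_{[1]}\in N\otimes_S\mathcal C$) are right ${}^*\mathcal C$-modules via $n\cdot f=n_{[0]}f(n_{[1]})$. For a right ${}^*\mathcal C$-module $M$, $\mathrm{Rat}^{\mathcal C}(M)$ is the set of $m\in M$ for which there is $\sum_i m_i\otimes c_i\in M\otimes_S\mathcal C$ with $m\cdot f=\sum_i m_if(c_i)$ for all $f\in{}^*\mathcal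 C$. The finite topology on ${}^*\mathcal C={}_S\mathrm{Hom}(\mathcal C,S)$ has basic open sets $\{g\mid g(c)=f(c)\ \forall c\in F\}$, $F\subseteq\mathcal C$ finite. *)

theory Defs
  imports "HOL-Algebra.Algebra"
begin

definition R_linear_endo ::
  "('r,'a) ring_scheme \<Rightarrow> ('s,'b) ring_scheme \<Rightarrow> ('r \<Rightarrow> 's) \<Rightarrow> ('s \<Rightarrow> 's) \<Rightarrow> bool" where
  "R_linear_endo R S \<iota> \<phi> \<longleftrightarrow>
     \<phi> \<in> carrier S \<rightarrow>\<^sub>E carrier S \<and>
     (\<forall>x\<in>carrier S. \<forall>y\<in>carrier S. \<phi> (x \<oplus>\<^bsub>S\<^esub> y) = \<phi> x \<oplus>\<^bsub>S\<^esub> \<phi> y) \<and>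
     (\<forall>r\<in>carrier R. \<forall>x\<in>carrier S. \<phi> (\<iota> r \<otimes>\<^bsub>S\<^esub> x) = \<iota> r \<otimes>\<^bsub>S\<^esub> \<phi> x)"

text \<open>The ring *C = {}_S Hom(S \<otimes>_R S, S), realised as {}_R End(S) with the
 opposite composition  (phi # psi) = psi o phi.  The element phi corresponds to the
 map s \<otimes> s' \<mapsto> s * phi s'.\<close>
definition Cstar :: "('r,'a) ring_scheme \<Rightarrow> ('s,'b) ring_scheme \<Rightarrow> ('r \<Rightarrow> 's) \<Rightarrow> ('s \<Rightarrow> 's) ring" where
  "Cstar R S \<iota> =
     \<lparr>carrier = {\<phi>. R_linear_endo R S \<iota> \<phi>},
      monoid.mult = (\<lambda>\<phi> \<psi>. restrict (\<psi> \<circ> \<phi>) (carrier S)),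
      monoid.one = restrict id (carrier S),
      ring.zero = restrict (\<lambda>_. \<zero>\<^bsub>S\<^esub>) (carrier S),
      ring.add = (\<lambda>\<phi> \<psi>. restrict (\<lambda>x. \<phi> x \<oplus>\<^bsub>S\<^esub> \<psi> x) (carrier S))\<rparr>"

text \<open>The ring map S \<rightarrow> *C, a \<mapsto> epsilon(-) a; in End-form: right multiplication by a.\<close>
definition rmult :: "('s,'b) ring_scheme \<Rightarrow> 's \<Rightarrow> ('s \<Rightarrow> 's)" where
  "rmult S a = restrict (\<lambda>x. x \<otimes>\<^bsub>S\<^esub> a) (carrier S)"

text \<open>Elements of the Sweedler coring C = S \<otimes>_R S are represented by lists of
 pairs [(t1,t1'),...,(tk,tk')] standing for the sum of the ti \<otimes> ti'.\<close>
definition sweedler_elem :: "('s,'b) ring_scheme \<Rightarrow> ('s \<times> 's) list \<Rightarrow> bool" where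
  "sweedler_elem S c \<longleftrightarrow> set c \<subseteq> carrier S \<times> carrier S"

definition coring_eval :: "('s,'b) ring_scheme \<Rightarrow> ('s \<Rightarrow> 's) \<Rightarrow> ('s \<times> 's) list \<Rightarrow> 's" where
  "coring_eval S \<phi> c = (\<Oplus>\<^bsub>S\<^esub> i\<in>{..<length c}. fst (c!i) \<otimes>\<^bsub>S\<^esub> \<phi> (snd (c!i)))"

definition right_Cstar_module ::
  "('r,'a) ring_scheme \<Rightarrow> ('s,'b) ring_scheme \<Rightarrow> ('r \<Rightarrow> 's) \<Rightarrow>
   ('m,'c) ring_scheme \<Rightarrow> ('m \<Rightarrow> ('s \<Rightarrow> 's) \<Rightarrow> 'm) \<Rightarrow> bool" where
  "right_Cstar_module R S \<iota> M act \<longleftrightarrow>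
     abelian_group M \<and>
     (\<forall>m\<in>carrier M. \<forall>\<phi>\<in>carrier (Cstar R S \<iota>). act m \<phi> \<in> carrier M) \<and>
     (\<forall>m\<in>carrier M. \<forall>n\<in>carrier M. \<forall>\<phi>\<in>carrier (Cstar R S \<iota>).
        act (m \<oplus>\<^bsub>M\<^esub> n) \<phi> = act m \<phi> \<oplus>\<^bsub>M\<^esub> act n \<phi>) \<and>
     (\<forall>m\<in>carrier M. \<forall>\<phi>\<in>carrier (Cstar R S \<iota>). \<forall>\<psi>\<in>carrier (Cstar R S \<iota>).
        act m (\<phi> \<oplus>\<^bsub>Cstar R S \<iota>\<^esub> \<psi>) = act m \<phi> \<oplus>\<^bsub>M\<^esub> act m \<psi>) \<and>
     (\<forall>m\<in>carrier M. \<forall>\<phi>\<in>carrier (Cstar R S \<iota>). \<forall>\<psi>\<in>carrier (Cstar R S \<iota>).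
        act m (\<phi> \<otimes>\<^bsub>Cstar R S \<iota>\<^esub> \<psi>) = act (act m \<phi>) \<psi>) \<and>
     (\<forall>m\<in>carrier M. act m \<one>\<^bsub>Cstar R S \<iota>\<^esub> = m)"

definition Cstar_mod_hom ::
  "('r,'a) ring_scheme \<Rightarrow> ('s,'b) ring_scheme \<Rightarrow> ('r \<Rightarrow> 's) \<Rightarrow>
   ('m,'c) ring_scheme \<Rightarrow> ('m \<Rightarrow> ('s \<Rightarrow> 's) \<Rightarrow> 'm) \<Rightarrow>
   ('n,'d) ring_scheme \<Rightarrow> ('n \<Rightarrow> ('s \<Rightarrow> 's) \<Rightarrow> 'n) \<Rightarrow> ('m \<Rightarrow> 'n) \<Rightarrow> bool" where
  "Cstar_mod_hom R S \<iota> M a N b f \<longleftrightarrow>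
     f \<in> carrier M \<rightarrow> carrier N \<and>
     (\<forall>x\<in>carrier M. \<forall>y\<in>carrier M. f (x \<oplus>\<^bsub>M\<^esub> y) = f x \<oplus>\<^bsub>N\<^esub> f y) \<and>
     (\<forall>x\<in>carrier M. \<forall>\<phi>\<in>carrier (Cstar R S \<iota>). f (a x \<phi>) = b (f x) \<phi>)"

text \<open>Rat^C(M): those m for which there is sum n_i \<otimes>_S c_i in M \<otimes>_S C
 (c_i = t_i \<otimes>_R t_i' elementary; general elements are sums of such) with
 m . f = sum n_i f(c_i) for all f in *C.  Here n . s is the S-action via rmult.\<close>
definition Rat ::
  "('r,'a) ring_scheme \<Rightarrow> ('s,'b) ring_scheme \<Rightarrow> ('r \<Rightarrow> 's) \<Rightarrow>
   ('m,'c) ring_scheme \<Rightarrow> ('m \<Rightarrow> ('s \<Rightarrow> 's) \<Rightarrow> 'm) \<Rightarrow> 'm set" where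
  "Rat R S \<iota> M act =
     {m \<in> carrier M. \<exists>xs :: ('m \<times> 's \<times> 's) list.
        (\<forall>(n,t,t')\<in>set xs. n \<in> carrier M \<and> t \<in> carrier S \<and> t' \<in> carrier S) \<and>
        (\<forall>\<phi>\<in>carrier (Cstar R S \<iota>).
           act m \<phi> = (\<Oplus>\<^bsub>M\<^esub> i\<in>{..<length xs}.
              act (fst (xs!i)) (rmult S (coring_eval S \<phi> [snd (xs!i)]))))}"

text \<open>S locally projective as a left R-module (Zimmermann-Huisgen), in its
 finite dual basis form: for every finite F \<subseteq> S there are e_i \<in> S and
 f_i \<in> {}_R Hom(S,R) with x = sum f_i(x) . e_i for all x \<in> F.\<close>
definition locally_projective_left ::
  "('r,'a) ring_scheme \<Rightarrow> ('s,'b) ring_scheme \<Rightarrow> ('r \<Rightarrow> 's) \<Rightarrow> bool" where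
  "locally_projective_left R S \<iota> \<longleftrightarrow>
     (\<forall>F. finite F \<and> F \<subseteq> carrier S \<longrightarrow>
       (\<exists>bs :: (('s \<Rightarrow> 'r) \<times> 's) list.
          (\<forall>(f,e)\<in>set bs. e \<in> carrier S \<and> f \<in> carrier S \<rightarrow> carrier R \<and>
             (\<forall>x\<in>carrier S. \<forall>y\<in>carrier S. f (x \<oplus>\<^bsub>S\<^esub> y) = f x \<oplus>\<^bsub>R\<^esub> f y) \<and>
             (\<forall>r\<in>carrier R. \<forall>x\<in>carrier S. f (\<iota> r \<otimes>\<^bsub>S\<^esub> x) = r \<otimes>\<^bsub>R\<^esub> f x)) \<and>
          (\<forall>x\<in>F. x = (\<Oplus>\<^bsub>S\<^esub> i\<in>{..<length bs}. \<iota> (fst (bs!i) x) \<otimes>\<^bsub>S\<^esub> snd (bs!i)))))"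

end

theory Submission imports Defs begin

(* Write *C as the ring of left R-linear endomorphisms of S with opposite composition #.
   A finite dual family bs = [(f_1,e_1),...,(f_n,e_n)] (f_j : S -> R linear, e_j in S) gives
     u = sum_j f_j # rmult e_j  in *C,   i.e.  u(x) = sum_j iota(f_j x) e_j,
   and more generally u # phi = sum_j f_j # rmult (phi e_j).  Hence, in every right
   *C-module M, the element m.u is rational with coaction sum_j m.f_j (x) (1 (x) e_j).
   Conversely, a rational element y satisfies y.u = y as soon as bs reproduces the finitely
   many right tensor factors of its coaction, which local projectivity guarantees.  From them:
   - density: phi # u is rational and agrees with phi on a finite F once bs reproduces
     the values of phi at the right tensor factors of the elements of F;
   - exactness: Rat is a subfunctor, and if h y is rational then the rational element y.u
     has the same image h (y.u) = (h y).u = h y; this gives exactness of Rat. *)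

lemma add_hom_zero:
  assumes "abelian_group M" "abelian_group N" "h \<in> carrier M \<rightarrow> carrier N"
    "\<forall>x\<in>carrier M. \<forall>y\<in>carrier M. h (x \<oplus>\<^bsub>M\<^esub> y) = h x \<oplus>\<^bsub>N\<^esub> h y"
  shows "h \<zero>\<^bsub>M\<^esub> = \<zero>\<^bsub>N\<^esub>"
proof -
  interpret M: abelian_group M by fact
  interpret N: abelian_group N by fact
  have "h \<zero>\<^bsub>M\<^esub> \<oplus>\<^bsub>N\<^esub> h \<zero>\<^bsub>M\<^esub> = h \<zero>\<^bsub>M\<^esub>"
    using assms(4) by (metis M.zero_closed M.l_zero)
  then show ?thesis using assms(3) by (metis M.zero_closed N.add.l_cancel_one funcset_mem)
qed

lemma add_hom_finsum:
  assumes M: "abelian_group M" and N: "abelian_group N" and h: "h \<in> carrier M \<rightarrow> carrier N"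
    and add: "\<forall>x\<in>carrier M. \<forall>y\<in>carrier M. h (x \<oplus>\<^bsub>M\<^esub> y) = h x \<oplus>\<^bsub>N\<^esub> h y"
    and "finite A"
  shows "g \<in> A \<rightarrow> carrier M \<Longrightarrow> h (finsum M g A) = finsum N (\<lambda>i. h (g i)) A"
  using \<open>finite A\<close>
proof (induction A rule: finite_induct)
  case empty
  interpret M: abelian_group M by fact
  interpret N: abelian_group N by fact
  show ?case using add_hom_zero[OF M N h add] by simp
next
  case (insert a F)
  interpret M: abelian_group M by fact
  interpret N: abelian_group N by fact
  have g: "g \<in> F \<rightarrow> carrier M" "g a \<in> carrier M" using insert.prems by auto
  have "h (finsum M g (insert a F)) = h (g a) \<oplus>\<^bsub>N\<^esub> h (finsum M g F)"
    using insert g add by (simp add: M.finsum_insert M.finsum_closed)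
  also have "\<dots> = finsum N (\<lambda>i. h (g i)) (insert a F)"
    using insert g h by (subst N.finsum_insert) auto
  finally show ?case .
qed

lemma Rat_subset: "Rat R S \<iota> M act \<subseteq> carrier M"
  unfolding Rat_def by blast

locale sweedler_setting = R: ring R + S: ring S
  for R :: "'r ring" and S :: "'s ring" and \<iota> :: "'r \<Rightarrow> 's" +
  assumes iota_hom: "\<iota> \<in> ring_hom R S"
begin

abbreviation "C \<equiv> Cstar R S \<iota>"

lemma iota_closed [simp]: "r \<in> carrier R \<Longrightarrow> \<iota> r \<in> carrier S"
  using iota_hom by (simp add: ring_hom_closed)

lemma Cstar_simps:
  "\<phi> \<otimes>\<^bsub>C\<^esub> \<psi> = restrict (\<psi> \<circ> \<phi>) (carrier S)"
  "\<one>\<^bsub>C\<^esub> = restrict id (carrier S)"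
  "\<zero>\<^bsub>C\<^esub> = restrict (\<lambda>_. \<zero>\<^bsub>S\<^esub>) (carrier S)"
  "\<phi> \<oplus>\<^bsub>C\<^esub> \<psi> = restrict (\<lambda>x. \<phi> x \<oplus>\<^bsub>S\<^esub> \<psi> x) (carrier S)"
  by (simp_all add: Cstar_def)

lemma mem_Cstar: "\<phi> \<in> carrier C \<longleftrightarrow> \<phi> \<in> carrier S \<rightarrow>\<^sub>E carrier S \<and>
     (\<forall>x\<in>carrier S. \<forall>y\<in>carrier S. \<phi> (x \<oplus>\<^bsub>S\<^esub> y) = \<phi> x \<oplus>\<^bsub>S\<^esub> \<phi> y) \<and>
     (\<forall>r\<in>carrier R. \<forall>x\<in>carrier S. \<phi> (\<iota> r \<otimes>\<^bsub>S\<^esub> x) = \<iota> r \<otimes>\<^bsub>S\<^esub> \<phi> x)"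
  by (simp add: Cstar_def R_linear_endo_def)

lemma Cstar_apply_closed [simp]: "\<phi> \<in> carrier C \<Longrightarrow> x \<in> carrier S \<Longrightarrow> \<phi> x \<in> carrier S"
  unfolding mem_Cstar by auto

lemma Cstar_additive:
  "\<phi> \<in> carrier C \<Longrightarrow> x \<in> carrier S \<Longrightarrow> y \<in> carrier S \<Longrightarrow> \<phi> (x \<oplus>\<^bsub>S\<^esub> y) = \<phi> x \<oplus>\<^bsub>S\<^esub> \<phi> y"
  unfolding mem_Cstar by auto

lemma Cstar_linear:
  "\<phi> \<in> carrier C \<Longrightarrow> r \<in> carrier R \<Longrightarrow> x \<in> carrier S \<Longrightarrow> \<phi> (\<iota> r \<otimes>\<^bsub>S\<^esub> x) = \<iota> r \<otimes>\<^bsub>S\<^esub> \<phi> x"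
  unfolding mem_Cstar by auto

lemma Cstar_eqI:
  assumes "\<phi> \<in> carrier C" "\<psi> \<in> carrier C" "\<And>x. x \<in> carrier S \<Longrightarrow> \<phi> x = \<psi> x"
  shows "\<phi> = \<psi>"
  using assms by (intro extensionalityI[of _ "carrier S"]) (auto simp: mem_Cstar PiE_iff)

lemma Cstar_add_closed: "\<phi> \<in> carrier C \<Longrightarrow> \<psi> \<in> carrier C \<Longrightarrow> \<phi> \<oplus>\<^bsub>C\<^esub> \<psi> \<in> carrier C"
  unfolding Cstar_simps mem_Cstar[of "restrict _ _"]
  by (auto simp: Cstar_additive Cstar_linear S.a_ac S.r_distr)

lemma Cstar_zero_closed: "\<zero>\<^bsub>C\<^esub> \<in> carrier C"
  unfolding Cstar_simps mem_Cstar[of "restrict _ _"] by auto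

lemma Cstar_one_closed: "\<one>\<^bsub>C\<^esub> \<in> carrier C"
  unfolding Cstar_simps mem_Cstar[of "restrict _ _"] by auto

lemma Cstar_mult_closed: "\<phi> \<in> carrier C \<Longrightarrow> \<psi> \<in> carrier C \<Longrightarrow> \<phi> \<otimes>\<^bsub>C\<^esub> \<psi> \<in> carrier C"
  unfolding Cstar_simps mem_Cstar[of "restrict _ _"]
  by (auto simp: Cstar_additive Cstar_linear)

lemma Cstar_neg_closed: "\<phi> \<in> carrier C \<Longrightarrow> restrict (\<lambda>x. \<ominus>\<^bsub>S\<^esub> \<phi> x) (carrier S) \<in> carrier C"
  unfolding mem_Cstar[of "restrict _ _"]
  by (auto simp: Cstar_additive Cstar_linear S.minus_add S.r_minus)

lemma rmult_closed: "a \<in> carrier S \<Longrightarrow> rmult S a \<in> carrier C"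
  unfolding rmult_def mem_Cstar[of "restrict _ _"]
  by (auto simp: S.l_distr S.m_assoc)

lemma Cstar_abelian_group: "abelian_group C"
proof (rule abelian_groupI)
  fix x y z assume xyz: "x \<in> carrier C" "y \<in> carrier C" "z \<in> carrier C"
  show "x \<oplus>\<^bsub>C\<^esub> y \<in> carrier C" using xyz Cstar_add_closed by blast
  show "x \<oplus>\<^bsub>C\<^esub> y \<oplus>\<^bsub>C\<^esub> z = x \<oplus>\<^bsub>C\<^esub> (y \<oplus>\<^bsub>C\<^esub> z)"
    unfolding Cstar_simps using xyz by (intro restrict_ext) (simp add: S.a_assoc)
  show "x \<oplus>\<^bsub>C\<^esub> y = y \<oplus>\<^bsub>C\<^esub> x"
    unfolding Cstar_simps using xyz by (intro restrict_ext) (simp add: S.a_comm)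
next
  show "\<zero>\<^bsub>C\<^esub> \<in> carrier C" by (rule Cstar_zero_closed)
next
  fix x assume x: "x \<in> carrier C"
  show "\<zero>\<^bsub>C\<^esub> \<oplus>\<^bsub>C\<^esub> x = x"
    using x Cstar_add_closed[OF Cstar_zero_closed x] by (intro Cstar_eqI) (auto simp: Cstar_simps)
  show "\<exists>y\<in>carrier C. y \<oplus>\<^bsub>C\<^esub> x = \<zero>\<^bsub>C\<^esub>"
    using x Cstar_neg_closed[OF x]
    by (intro bexI[of _ "restrict (\<lambda>x'. \<ominus>\<^bsub>S\<^esub> x x') (carrier S)"])
       (auto simp: Cstar_simps intro!: restrict_ext S.l_neg)
qed

lemma Cstar_right_module: "right_Cstar_module R S \<iota> C (monoid.mult C)"
  unfolding right_Cstar_module_def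
proof (intro conjI ballI)
  show "abelian_group C" by (rule Cstar_abelian_group)
  fix m n \<phi> \<psi>
  assume m: "m \<in> carrier C" and n: "n \<in> carrier C" and \<phi>: "\<phi> \<in> carrier C" and \<psi>: "\<psi> \<in> carrier C"
  show "m \<otimes>\<^bsub>C\<^esub> \<phi> \<in> carrier C" using m \<phi> by (rule Cstar_mult_closed)
  show "(m \<oplus>\<^bsub>C\<^esub> n) \<otimes>\<^bsub>C\<^esub> \<phi> = m \<otimes>\<^bsub>C\<^esub> \<phi> \<oplus>\<^bsub>C\<^esub> n \<otimes>\<^bsub>C\<^esub> \<phi>"
    unfolding Cstar_simps using m n \<phi> by (intro restrict_ext) (simp add: Cstar_additive)
  show "m \<otimes>\<^bsub>C\<^esub> (\<phi> \<oplus>\<^bsub>C\<^esub> \<psi>) = m \<otimes>\<^bsub>C\<^esub> \<phi> \<oplus>\<^bsub>C\<^esub> m \<otimes>\<^bsub>C\<^esub> \<psi>"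
    unfolding Cstar_simps using m \<phi> \<psi> by (intro restrict_ext) simp
  show "m \<otimes>\<^bsub>C\<^esub> (\<phi> \<otimes>\<^bsub>C\<^esub> \<psi>) = m \<otimes>\<^bsub>C\<^esub> \<phi> \<otimes>\<^bsub>C\<^esub> \<psi>"
    unfolding Cstar_simps using m \<phi> \<psi> by (intro restrict_ext) simp
next
  fix m assume m: "m \<in> carrier C"
  show "m \<otimes>\<^bsub>C\<^esub> \<one>\<^bsub>C\<^esub> = m"
    using m Cstar_mult_closed[OF m Cstar_one_closed] by (intro Cstar_eqI) (auto simp: Cstar_simps)
qed

lemma module_facts:
  assumes "right_Cstar_module R S \<iota> M act"
  shows "abelian_group M"
    "\<And>m \<phi>. m \<in> carrier M \<Longrightarrow> \<phi> \<in> carrier C \<Longrightarrow> act m \<phi> \<in> carrier M"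
    "\<And>m \<phi> \<psi>. m \<in> carrier M \<Longrightarrow> \<phi> \<in> carrier C \<Longrightarrow> \<psi> \<in> carrier C \<Longrightarrow>
       act m (\<phi> \<oplus>\<^bsub>C\<^esub> \<psi>) = act m \<phi> \<oplus>\<^bsub>M\<^esub> act m \<psi>"
    "\<And>m \<phi> \<psi>. m \<in> carrier M \<Longrightarrow> \<phi> \<in> carrier C \<Longrightarrow> \<psi> \<in> carrier C \<Longrightarrow>
       act m (\<phi> \<otimes>\<^bsub>C\<^esub> \<psi>) = act (act m \<phi>) \<psi>"
    "\<And>m. m \<in> carrier M \<Longrightarrow> act m \<one>\<^bsub>C\<^esub> = m"
  using assms unfolding right_Cstar_module_def by blast+

lemma Cstar_finsum_apply:
  assumes "finite A" "x \<in> carrier S" "g \<in> A \<rightarrow> carrier C"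
  shows "finsum C g A x = finsum S (\<lambda>j. g j x) A"
  by (rule add_hom_finsum[OF Cstar_abelian_group S.abelian_group_axioms, where h = "\<lambda>\<phi>. \<phi> x"])
     (use assms in \<open>auto simp: Cstar_simps\<close>)

lemma act_finsum:
  assumes M: "right_Cstar_module R S \<iota> M act" and m: "m \<in> carrier M"
    and "finite A" "g \<in> A \<rightarrow> carrier C"
  shows "act m (finsum C g A) = finsum M (\<lambda>j. act m (g j)) A"
  by (rule add_hom_finsum[OF Cstar_abelian_group module_facts(1)[OF M]])
     (use assms module_facts(2,3)[OF M m] in auto)

end

definition dual_family ::
  "('r,'a) ring_scheme \<Rightarrow> ('s,'b) ring_scheme \<Rightarrow> ('r \<Rightarrow> 's) \<Rightarrow> (('s \<Rightarrow> 'r) \<times> 's) list \<Rightarrow> bool" where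
  "dual_family R S \<iota> bs \<longleftrightarrow> (\<forall>(f,e)\<in>set bs. e \<in> carrier S \<and> f \<in> carrier S \<rightarrow> carrier R \<and>
     (\<forall>x\<in>carrier S. \<forall>y\<in>carrier S. f (x \<oplus>\<^bsub>S\<^esub> y) = f x \<oplus>\<^bsub>R\<^esub> f y) \<and>
     (\<forall>r\<in>carrier R. \<forall>x\<in>carrier S. f (\<iota> r \<otimes>\<^bsub>S\<^esub> x) = r \<otimes>\<^bsub>R\<^esub> f x))"

definition reproduces ::
  "('s,'b) ring_scheme \<Rightarrow> ('r \<Rightarrow> 's) \<Rightarrow> (('s \<Rightarrow> 'r) \<times> 's) list \<Rightarrow> 's \<Rightarrow> bool" where
  "reproduces S \<iota> bs x \<longleftrightarrow> x = (\<Oplus>\<^bsub>S\<^esub> j\<in>{..<length bs}. \<iota> (fst (bs!j) x) \<otimes>\<^bsub>S\<^esub> snd (bs!j))"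

definition form_endo :: "('s,'b) ring_scheme \<Rightarrow> ('r \<Rightarrow> 's) \<Rightarrow> ('s \<Rightarrow> 'r) \<Rightarrow> ('s \<Rightarrow> 's)" where
  "form_endo S \<iota> f = restrict (\<lambda>x. \<iota> (f x)) (carrier S)"

text \<open>The element \<open>\<Sum>_j f_j # rmult (\<phi> e_j)\<close> of \<open>*C\<close>; it equals \<open>u # \<phi>\<close> for \<open>u = dual_approx bs 1\<close>.\<close>
definition dual_approx ::
  "('r,'a) ring_scheme \<Rightarrow> ('s,'b) ring_scheme \<Rightarrow> ('r \<Rightarrow> 's) \<Rightarrow> (('s \<Rightarrow> 'r) \<times> 's) list \<Rightarrow>
   ('s \<Rightarrow> 's) \<Rightarrow> ('s \<Rightarrow> 's)" where
  "dual_approx R S \<iota> bs \<phi> = finsum (Cstar R S \<iota>)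
     (\<lambda>j. form_endo S \<iota> (fst (bs!j)) \<otimes>\<^bsub>Cstar R S \<iota>\<^esub> rmult S (\<phi> (snd (bs!j)))) {..<length bs}"

context sweedler_setting begin

abbreviation "approx \<equiv> dual_approx R S \<iota>"

lemma dual_family_nth:
  assumes "dual_family R S \<iota> bs" "j < length bs"
  shows "snd (bs!j) \<in> carrier S"
    "\<And>x. x \<in> carrier S \<Longrightarrow> fst (bs!j) x \<in> carrier R"
    "\<And>x y. x\<in>carrier S \<Longrightarrow> y\<in>carrier S \<Longrightarrow> fst (bs!j) (x \<oplus>\<^bsub>S\<^esub> y) = fst (bs!j) x \<oplus>\<^bsub>R\<^esub> fst (bs!j) y"
    "\<And>r x. r\<in>carrier R \<Longrightarrow> x\<in>carrier S \<Longrightarrow> fst (bs!j) (\<iota> r \<otimes>\<^bsub>S\<^esub> x) = r \<otimes>\<^bsub>R\<^esub> fst (bs!j) x"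
  using assms nth_mem[OF assms(2)] unfolding dual_family_def by (auto simp: case_prod_beta)

lemma form_endo_closed:
  assumes "dual_family R S \<iota> bs" "j < length bs"
  shows "form_endo S \<iota> (fst (bs!j)) \<in> carrier C"
  unfolding form_endo_def mem_Cstar[of "restrict _ _"]
  using dual_family_nth[OF assms] iota_hom
  by (auto simp: ring_hom_add ring_hom_mult)

lemma dual_approx_terms_closed:
  assumes "dual_family R S \<iota> bs" "\<phi> \<in> carrier C"
  shows "(\<lambda>j. form_endo S \<iota> (fst (bs!j)) \<otimes>\<^bsub>C\<^esub> rmult S (\<phi> (snd (bs!j)))) \<in> {..<length bs} \<rightarrow> carrier C"
  using assms form_endo_closed dual_family_nth(1) by (auto intro!: Cstar_mult_closed rmult_closed)

lemma dual_approx_closed: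
  assumes "dual_family R S \<iota> bs" "\<phi> \<in> carrier C"
  shows "approx bs \<phi> \<in> carrier C"
proof -
  interpret C: abelian_group C by (rule Cstar_abelian_group)
  show ?thesis
    unfolding dual_approx_def using dual_approx_terms_closed[OF assms] by (rule C.finsum_closed)
qed

lemma dual_approx_apply:
  assumes "dual_family R S \<iota> bs" "\<phi> \<in> carrier C" "x \<in> carrier S"
  shows "approx bs \<phi> x = (\<Oplus>\<^bsub>S\<^esub> j\<in>{..<length bs}. \<iota> (fst (bs!j) x) \<otimes>\<^bsub>S\<^esub> \<phi> (snd (bs!j)))"
  unfolding dual_approx_def
  using assms dual_family_nth[OF assms(1)]
  by (simp add: Cstar_finsum_apply[OF _ assms(3) dual_approx_terms_closed[OF assms(1,2)]])
     (auto simp: Cstar_simps form_endo_def rmult_def intro!: S.finsum_cong')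

text \<open>The unit \<open>u = approx bs 1\<close> is the map \<open>x \<mapsto> \<Sum>_j \<iota>(f_j x) e_j\<close>, and
  \<open>approx bs \<phi> = \<phi> \<circ> u\<close> by \<open>R\<close>-linearity of \<open>\<phi>\<close>, i.e. \<open>approx bs \<phi> = u # \<phi>\<close>.\<close>

lemma dual_approx_one_apply:
  assumes "dual_family R S \<iota> bs" "x \<in> carrier S"
  shows "approx bs \<one>\<^bsub>C\<^esub> x = (\<Oplus>\<^bsub>S\<^esub> j\<in>{..<length bs}. \<iota> (fst (bs!j) x) \<otimes>\<^bsub>S\<^esub> snd (bs!j))"
  using dual_approx_apply[OF assms(1) Cstar_one_closed assms(2)] assms dual_family_nth[OF assms(1)]
  by (auto simp: Cstar_simps intro!: S.finsum_cong')

lemma dual_approx_comp: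
  assumes bs: "dual_family R S \<iota> bs" and \<phi>: "\<phi> \<in> carrier C" and x: "x \<in> carrier S"
  shows "approx bs \<phi> x = \<phi> (approx bs \<one>\<^bsub>C\<^esub> x)"
proof -
  have "\<phi> (approx bs \<one>\<^bsub>C\<^esub> x) = (\<Oplus>\<^bsub>S\<^esub> j\<in>{..<length bs}. \<phi> (\<iota> (fst (bs!j) x) \<otimes>\<^bsub>S\<^esub> snd (bs!j)))"
    unfolding dual_approx_one_apply[OF bs x]
    by (rule add_hom_finsum[OF S.abelian_group_axioms S.abelian_group_axioms])
       (use \<phi> x dual_family_nth[OF bs] in \<open>auto simp: Cstar_additive\<close>)
  also have "\<dots> = approx bs \<phi> x"
    using dual_approx_apply[OF bs \<phi> x] \<phi> x dual_family_nth[OF bs]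
    by (auto simp: Cstar_linear intro!: S.finsum_cong')
  finally show ?thesis by simp
qed

lemma dual_approx_mult:
  assumes bs: "dual_family R S \<iota> bs" and \<phi>: "\<phi> \<in> carrier C"
  shows "approx bs \<one>\<^bsub>C\<^esub> \<otimes>\<^bsub>C\<^esub> \<phi> = approx bs \<phi>"
proof (rule Cstar_eqI)
  show "approx bs \<one>\<^bsub>C\<^esub> \<otimes>\<^bsub>C\<^esub> \<phi> \<in> carrier C"
    using Cstar_mult_closed[OF dual_approx_closed[OF bs Cstar_one_closed] \<phi>] .
  show "approx bs \<phi> \<in> carrier C" using dual_approx_closed[OF bs \<phi>] .
  fix x assume "x \<in> carrier S"
  then show "(approx bs \<one>\<^bsub>C\<^esub> \<otimes>\<^bsub>C\<^esub> \<phi>) x = approx bs \<phi> x"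
    using dual_approx_comp[OF bs \<phi>] by (simp add: Cstar_simps(1))
qed

lemma dual_unit_fixes:
  assumes "dual_family R S \<iota> bs" "x \<in> carrier S" "reproduces S \<iota> bs x"
  shows "approx bs \<one>\<^bsub>C\<^esub> x = x"
  using dual_approx_one_apply[OF assms(1,2)] assms(3) unfolding reproduces_def by simp

lemma dual_family_exists:
  assumes "locally_projective_left R S \<iota>" "finite G" "G \<subseteq> carrier S"
  obtains bs where "dual_family R S \<iota> bs" "\<And>x. x \<in> G \<Longrightarrow> reproduces S \<iota> bs x"
  using assms unfolding locally_projective_left_def dual_family_def reproduces_def by meson

lemma coring_eval_single:
  assumes "fst p \<in> carrier S" "snd p \<in> carrier S" "\<phi> \<in> carrier C"
  shows "coring_eval S \<phi> [p] = fst p \<otimes>\<^bsub>S\<^esub> \<phi> (snd p)"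
proof -
  have "{..<length [p]} = {0}" by auto
  then show ?thesis unfolding coring_eval_def using assms by simp
qed

lemma coring_eval_cong:
  assumes "sweedler_elem S c" "\<phi> \<in> carrier C" "\<And>t'. t' \<in> snd ` set c \<Longrightarrow> \<psi> t' = \<phi> t'"
  shows "coring_eval S \<psi> c = coring_eval S \<phi> c"
  unfolding coring_eval_def
proof (rule S.finsum_cong'[OF refl])
  have "c!i \<in> carrier S \<times> carrier S" if "i < length c" for i
    using assms(1) nth_mem[OF that] unfolding sweedler_elem_def by blast
  then show "(\<lambda>i. fst (c!i) \<otimes>\<^bsub>S\<^esub> \<phi> (snd (c!i))) \<in> {..<length c} \<rightarrow> carrier S"
    using assms(2) by (auto simp: mem_Times_iff)
  fix i assume "i \<in> {..<length c}"
  then show "fst (c!i) \<otimes>\<^bsub>S\<^esub> \<psi> (snd (c!i)) = fst (c!i) \<otimes>\<^bsub>S\<^esub> \<phi> (snd (c!i))"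
    using assms(3) by simp
qed

lemma Rat_intro:
  assumes M: "right_Cstar_module R S \<iota> M act" and m: "m \<in> carrier M"
    and bs: "dual_family R S \<iota> bs" and n: "\<And>j. j < length bs \<Longrightarrow> n j \<in> carrier M"
    and eq: "\<And>\<phi>. \<phi> \<in> carrier C \<Longrightarrow>
       act m \<phi> = finsum M (\<lambda>j. act (n j) (rmult S (\<phi> (snd (bs!j))))) {..<length bs}"
  shows "m \<in> Rat R S \<iota> M act"
proof -
  interpret M: abelian_group M by (rule module_facts(1)[OF M])
  define xs where "xs = map (\<lambda>j. (n j, \<one>\<^bsub>S\<^esub>, snd (bs!j))) [0..<length bs]"
  have "\<forall>(n,t,t')\<in>set xs. n \<in> carrier M \<and> t \<in> carrier S \<and> t' \<in> carrier S"
    unfolding xs_def using n dual_family_nth(1)[OF bs] by auto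
  moreover have "act m \<phi> =
      (\<Oplus>\<^bsub>M\<^esub> i\<in>{..<length xs}. act (fst (xs!i)) (rmult S (coring_eval S \<phi> [snd (xs!i)])))"
    if \<phi>: "\<phi> \<in> carrier C" for \<phi>
    unfolding eq[OF \<phi>] xs_def
    using n dual_family_nth(1)[OF bs] \<phi> rmult_closed
    by (intro M.finsum_cong') (auto simp: coring_eval_single module_facts[OF M])
  ultimately show ?thesis unfolding Rat_def using m by blast
qed

text \<open>Key construction: \<open>m.u\<close> is rational for every module element \<open>m\<close>, with coaction
  \<open>\<Sum>_j m.f_j \<otimes> (1 \<otimes> e_j)\<close>, since \<open>(m.u).\<phi> = m.(u # \<phi>) = \<Sum>_j (m.f_j).rmult(\<phi> e_j)\<close>.\<close>
lemma act_dual_unit_rational: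
  assumes M: "right_Cstar_module R S \<iota> M act" and m: "m \<in> carrier M"
    and bs: "dual_family R S \<iota> bs"
  shows "act m (approx bs \<one>\<^bsub>C\<^esub>) \<in> Rat R S \<iota> M act"
proof -
  interpret M: abelian_group M by (rule module_facts(1)[OF M])
  have u: "approx bs \<one>\<^bsub>C\<^esub> \<in> carrier C" by (rule dual_approx_closed[OF bs Cstar_one_closed])
  have f: "\<And>j. j < length bs \<Longrightarrow> form_endo S \<iota> (fst (bs!j)) \<in> carrier C"
    using form_endo_closed[OF bs] .
  show ?thesis
  proof (rule Rat_intro[OF M module_facts(2)[OF M m u] bs])
    fix j assume "j < length bs"
    then show "act m (form_endo S \<iota> (fst (bs!j))) \<in> carrier M" using module_facts(2)[OF M m] f by blast
  next
    fix \<phi> assume \<phi>: "\<phi> \<in> carrier C"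
    have r: "\<And>j. j < length bs \<Longrightarrow> rmult S (\<phi> (snd (bs!j))) \<in> carrier C"
      using dual_family_nth(1)[OF bs] \<phi> by (auto intro: rmult_closed)
    have "act (act m (approx bs \<one>\<^bsub>C\<^esub>)) \<phi> = act m (approx bs \<phi>)"
      using module_facts(4)[OF M m u \<phi>] dual_approx_mult[OF bs \<phi>] by simp
    also have "\<dots> = finsum M
        (\<lambda>j. act m (form_endo S \<iota> (fst (bs!j)) \<otimes>\<^bsub>C\<^esub> rmult S (\<phi> (snd (bs!j))))) {..<length bs}"
      unfolding dual_approx_def by (rule act_finsum[OF M m _ dual_approx_terms_closed[OF bs \<phi>]]) simp
    also have "\<dots> = finsum M
        (\<lambda>j. act (act m (form_endo S \<iota> (fst (bs!j)))) (rmult S (\<phi> (snd (bs!j))))) {..<length bs}"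
      using f r module_facts(2,4)[OF M m] module_facts(2)[OF M]
      by (intro M.finsum_cong') auto
    finally show "act (act m (approx bs \<one>\<^bsub>C\<^esub>)) \<phi> = finsum M
        (\<lambda>j. act (act m (form_endo S \<iota> (fst (bs!j)))) (rmult S (\<phi> (snd (bs!j))))) {..<length bs}" .
  qed
qed

text \<open>Conversely, a rational element is fixed by the unit of a dual family reproducing the
  right tensor factors of its coaction.\<close>
lemma rational_fixed_by_dual_unit:
  assumes M: "right_Cstar_module R S \<iota> M act" and lp: "locally_projective_left R S \<iota>"
    and y: "y \<in> Rat R S \<iota> M act"
  obtains bs where "dual_family R S \<iota> bs" "act y (approx bs \<one>\<^bsub>C\<^esub>) = y"
proof -
  interpret M: abelian_group M by (rule module_facts(1)[OF M])
  obtain xs where ym: "y \<in> carrier M"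
    and xs: "\<forall>(n,t,t')\<in>set xs. n \<in> carrier M \<and> t \<in> carrier S \<and> t' \<in> carrier S"
    and coact: "\<And>\<phi>. \<phi> \<in> carrier C \<Longrightarrow> act y \<phi> =
        (\<Oplus>\<^bsub>M\<^esub> i\<in>{..<length xs}. act (fst (xs!i)) (rmult S (coring_eval S \<phi> [snd (xs!i)])))"
    using y unfolding Rat_def by blast
  have xsi: "fst (xs!i) \<in> carrier M" "fst (snd (xs!i)) \<in> carrier S" "snd (snd (xs!i)) \<in> carrier S"
    if "i < length xs" for i using xs nth_mem[OF that] by auto
  have fin: "finite ((\<lambda>p. snd (snd p)) ` set xs)" and sub: "(\<lambda>p. snd (snd p)) ` set xs \<subseteq> carrier S"
    using xs by auto
  obtain bs where bs: "dual_family R S \<iota> bs"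
    and rep: "\<And>x. x \<in> (\<lambda>p. snd (snd p)) ` set xs \<Longrightarrow> reproduces S \<iota> bs x"
    using dual_family_exists[OF lp fin sub] by blast
  have u: "approx bs \<one>\<^bsub>C\<^esub> \<in> carrier C" by (rule dual_approx_closed[OF bs Cstar_one_closed])
  have ce: "coring_eval S (approx bs \<one>\<^bsub>C\<^esub>) [snd (xs!i)] = coring_eval S \<one>\<^bsub>C\<^esub> [snd (xs!i)]"
    if i: "i < length xs" for i
  proof -
    have "reproduces S \<iota> bs (snd (snd (xs!i)))" using i by (intro rep) simp
    then show ?thesis
      using coring_eval_single xsi(2,3)[OF i] u Cstar_one_closed dual_unit_fixes[OF bs xsi(3)[OF i]]
      by (simp add: Cstar_simps)
  qed
  have "(\<lambda>i. act (fst (xs!i)) (rmult S (coring_eval S \<one>\<^bsub>C\<^esub> [snd (xs!i)])))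
      \<in> {..<length xs} \<rightarrow> carrier M"
    using xsi Cstar_one_closed
    by (auto simp: coring_eval_single Cstar_simps intro!: module_facts(2)[OF M] rmult_closed)
  then have "act y (approx bs \<one>\<^bsub>C\<^esub>) = act y \<one>\<^bsub>C\<^esub>"
    unfolding coact[OF u] coact[OF Cstar_one_closed] using ce by (intro M.finsum_cong') auto
  then show ?thesis using that[OF bs] module_facts(5)[OF M ym] by simp
qed

lemma Rat_hom_image:
  assumes M: "right_Cstar_module R S \<iota> M a" and N: "right_Cstar_module R S \<iota> N b"
    and h: "Cstar_mod_hom R S \<iota> M a N b h" and y: "y \<in> Rat R S \<iota> M a"
  shows "h y \<in> Rat R S \<iota> N b"
proof -
  interpret M: abelian_group M by (rule module_facts(1)[OF M])
  interpret N: abelian_group N by (rule module_facts(1)[OF N])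
  have hc: "h \<in> carrier M \<rightarrow> carrier N"
    and hadd: "\<forall>x\<in>carrier M. \<forall>y\<in>carrier M. h (x \<oplus>\<^bsub>M\<^esub> y) = h x \<oplus>\<^bsub>N\<^esub> h y"
    and hact: "\<And>x \<phi>. x \<in> carrier M \<Longrightarrow> \<phi> \<in> carrier C \<Longrightarrow> h (a x \<phi>) = b (h x) \<phi>"
    using h unfolding Cstar_mod_hom_def by auto
  obtain xs where ym: "y \<in> carrier M"
    and xs: "\<forall>(n,t,t')\<in>set xs. n \<in> carrier M \<and> t \<in> carrier S \<and> t' \<in> carrier S"
    and coact: "\<And>\<phi>. \<phi> \<in> carrier C \<Longrightarrow> a y \<phi> =
        (\<Oplus>\<^bsub>M\<^esub> i\<in>{..<length xs}. a (fst (xs!i)) (rmult S (coring_eval S \<phi> [snd (xs!i)])))"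
    using y unfolding Rat_def by blast
  define ys where "ys = map (\<lambda>(n,p). (h n, p)) xs"
  have xsi: "fst (xs!i) \<in> carrier M" "fst (snd (xs!i)) \<in> carrier S" "snd (snd (xs!i)) \<in> carrier S"
    if "i < length xs" for i using xs nth_mem[OF that] by auto
  have ysi: "ys!i = (h (fst (xs!i)), snd (xs!i))" if "i < length xs" for i
    unfolding ys_def using that by (simp add: case_prod_beta)
  have rm: "rmult S (coring_eval S \<phi> [snd (xs!i)]) \<in> carrier C"
    if "i < length xs" "\<phi> \<in> carrier C" for i \<phi>
    using xsi[OF that(1)] that(2) by (auto simp: coring_eval_single intro!: rmult_closed)
  have "\<forall>(n,t,t')\<in>set ys. n \<in> carrier N \<and> t \<in> carrier S \<and> t' \<in> carrier S"
    unfolding ys_def using xs hc by auto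
  moreover have "b (h y) \<phi> =
      (\<Oplus>\<^bsub>N\<^esub> i\<in>{..<length ys}. b (fst (ys!i)) (rmult S (coring_eval S \<phi> [snd (ys!i)])))"
    if \<phi>: "\<phi> \<in> carrier C" for \<phi>
  proof -
    have "b (h y) \<phi> = h (a y \<phi>)" using hact[OF ym \<phi>] by simp
    also have "\<dots> = (\<Oplus>\<^bsub>N\<^esub> i\<in>{..<length xs}. h (a (fst (xs!i)) (rmult S (coring_eval S \<phi> [snd (xs!i)]))))"
      unfolding coact[OF \<phi>]
      by (rule add_hom_finsum[OF M.abelian_group_axioms N.abelian_group_axioms hc hadd])
         (use xsi rm \<phi> module_facts(2)[OF M] in auto)
    also have "\<dots> = (\<Oplus>\<^bsub>N\<^esub> i\<in>{..<length ys}. b (fst (ys!i)) (rmult S (coring_eval S \<phi> [snd (ys!i)])))"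
      unfolding ys_def length_map
      using xsi rm \<phi> hact ysi[unfolded ys_def] hc module_facts(2)[OF N]
      by (intro N.finsum_cong') (auto intro!: module_facts(2)[OF N] funcset_mem[OF hc])
    finally show ?thesis .
  qed
  ultimately show ?thesis unfolding Rat_def using ym hc by blast
qed

text \<open>If the image of \<open>y\<close> under a \<open>*C\<close>-linear map is rational, then so is the image of some
  rational element, namely \<open>y.u\<close>, and the two images agree.  This is what makes \<open>Rat\<close> exact.\<close>
lemma rational_preimage:
  assumes M: "right_Cstar_module R S \<iota> M a" and N: "right_Cstar_module R S \<iota> N b"
    and lp: "locally_projective_left R S \<iota>"
    and h: "Cstar_mod_hom R S \<iota> M a N b h" and y: "y \<in> carrier M"
    and hy: "h y \<in> Rat R S \<iota> N b"
  shows "\<exists>y'\<in>Rat R S \<iota> M a. h y' = h y"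
proof -
  obtain bs where bs: "dual_family R S \<iota> bs" and fixed: "b (h y) (approx bs \<one>\<^bsub>C\<^esub>) = h y"
    by (rule rational_fixed_by_dual_unit[OF N lp hy])
  have "h (a y (approx bs \<one>\<^bsub>C\<^esub>)) = h y"
    using h y dual_approx_closed[OF bs Cstar_one_closed] fixed unfolding Cstar_mod_hom_def by simp
  then show ?thesis using act_dual_unit_rational[OF M y bs] by blast
qed

lemma Rat_Cstar_dense:
  assumes lp: "locally_projective_left R S \<iota>" and \<phi>: "\<phi> \<in> carrier C"
    and F: "finite F" "\<forall>c\<in>F. sweedler_elem S c"
  shows "\<exists>\<psi>\<in>Rat R S \<iota> C (monoid.mult C). \<forall>c\<in>F. coring_eval S \<psi> c = coring_eval S \<phi> c"
proof -
  define T where "T = (\<Union>c\<in>F. snd ` set c)"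
  have T: "finite T" "T \<subseteq> carrier S"
  proof -
    show "finite T" using F(1) unfolding T_def by simp
    show "T \<subseteq> carrier S"
    proof
      fix t assume "t \<in> T"
      then obtain c p where "c \<in> F" "p \<in> set c" "t = snd p" unfolding T_def by blast
      then have "p \<in> carrier S \<times> carrier S" using F(2) unfolding sweedler_elem_def by blast
      then show "t \<in> carrier S" using \<open>t = snd p\<close> by (simp add: mem_Times_iff)
    qed
  qed
  then have fin: "finite (\<phi> ` T)" and sub: "\<phi> ` T \<subseteq> carrier S" using \<phi> by auto
  obtain bs where bs: "dual_family R S \<iota> bs" and rep: "\<And>x. x \<in> \<phi> ` T \<Longrightarrow> reproduces S \<iota> bs x"
    using dual_family_exists[OF lp fin sub] by blast
  define \<psi> where "\<psi> = \<phi> \<otimes>\<^bsub>C\<^esub> approx bs \<one>\<^bsub>C\<^esub>"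
  have rational: "\<psi> \<in> Rat R S \<iota> C (monoid.mult C)"
    unfolding \<psi>_def by (rule act_dual_unit_rational[OF Cstar_right_module \<phi> bs])
  have agree: "\<psi> t = \<phi> t" if t: "t \<in> T" for t
  proof -
    have "\<phi> t \<in> carrier S" "reproduces S \<iota> bs (\<phi> t)" using t T(2) \<phi> by (auto intro: rep)
    then have "approx bs \<one>\<^bsub>C\<^esub> (\<phi> t) = \<phi> t" by (rule dual_unit_fixes[OF bs])
    then show ?thesis using t T(2) by (auto simp: \<psi>_def Cstar_simps(1))
  qed
  have "coring_eval S \<psi> c = coring_eval S \<phi> c" if c: "c \<in> F" for c
  proof (rule coring_eval_cong)
    show "sweedler_elem S c" using c F(2) by blast
    show "\<phi> \<in> carrier C" by (rule \<phi>)
    fix t assume "t \<in> snd ` set c"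
    then have "t \<in> T" using c unfolding T_def by blast
    then show "\<psi> t = \<phi> t" by (rule agree)
  qed
  then show ?thesis using rational by blast
qed

lemma Rat_exact:
  assumes lp: "locally_projective_left R S \<iota>"
    and M1: "right_Cstar_module R S \<iota> M1 a1" and M2: "right_Cstar_module R S \<iota> M2 a2"
    and M3: "right_Cstar_module R S \<iota> M3 a3"
    and f: "Cstar_mod_hom R S \<iota> M1 a1 M2 a2 f" and g: "Cstar_mod_hom R S \<iota> M2 a2 M3 a3 g"
    and inj: "inj_on f (carrier M1)"
    and ker: "f ` carrier M1 = {y \<in> carrier M2. g y = \<zero>\<^bsub>M3\<^esub>}"
    and surj: "g ` carrier M2 = carrier M3"
  shows "inj_on f (Rat R S \<iota> M1 a1)"
    "f ` Rat R S \<iota> M1 a1 = {y \<in> Rat R S \<iota> M2 a2. g y = \<zero>\<^bsub>M3\<^esub>}"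
    "g ` Rat R S \<iota> M2 a2 = Rat R S \<iota> M3 a3"
proof -
  show "inj_on f (Rat R S \<iota> M1 a1)" using inj Rat_subset by (rule inj_on_subset)
  have "f x \<in> {y \<in> Rat R S \<iota> M2 a2. g y = \<zero>\<^bsub>M3\<^esub>}" if x: "x \<in> Rat R S \<iota> M1 a1" for x
  proof -
    have "f x \<in> f ` carrier M1" using subsetD[OF Rat_subset x] by (rule imageI)
    then show ?thesis using ker Rat_hom_image[OF M1 M2 f x] by simp
  qed
  moreover have "y \<in> f ` Rat R S \<iota> M1 a1"
    if y: "y \<in> Rat R S \<iota> M2 a2" and gy: "g y = \<zero>\<^bsub>M3\<^esub>" for y
  proof -
    have "y \<in> f ` carrier M1" unfolding ker using subsetD[OF Rat_subset y] gy by simp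
    then obtain x where x: "x \<in> carrier M1" and yx: "y = f x" by blast
    obtain x' where "x' \<in> Rat R S \<iota> M1 a1" "f x' = f x"
      using rational_preimage[OF M1 M2 lp f x] y unfolding yx by blast
    then show ?thesis unfolding yx by (metis image_eqI)
  qed
  ultimately show "f ` Rat R S \<iota> M1 a1 = {y \<in> Rat R S \<iota> M2 a2. g y = \<zero>\<^bsub>M3\<^esub>}"
    by (intro equalityI subsetI) auto
  have "z \<in> g ` Rat R S \<iota> M2 a2" if z: "z \<in> Rat R S \<iota> M3 a3" for z
  proof -
    have "z \<in> g ` carrier M2" unfolding surj using subsetD[OF Rat_subset z] .
    then obtain y where y: "y \<in> carrier M2" and zy: "z = g y" by blast
    obtain y' where "y' \<in> Rat R S \<iota> M2 a2" "g y' = g y"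
      using rational_preimage[OF M2 M3 lp g y] z unfolding zy by blast
    then show ?thesis unfolding zy by (metis image_eqI)
  qed
  then show "g ` Rat R S \<iota> M2 a2 = Rat R S \<iota> M3 a3"
    using Rat_hom_image[OF M2 M3 g] by (intro equalityI subsetI) auto
qed

end

theorem mainTheorem18:
  fixes R :: "'r ring" and S :: "'s ring" and \<iota> :: "'r \<Rightarrow> 's"
  assumes "ring R" and "ring S" and "\<iota> \<in> ring_hom R S"
    and "locally_projective_left R S \<iota>"
  shows "(\<forall>\<phi>\<in>carrier (Cstar R S \<iota>). \<forall>F. finite F \<and> (\<forall>c\<in>F. sweedler_elem S c) \<longrightarrow>
            (\<exists>\<psi>\<in>Rat R S \<iota> (Cstar R S \<iota>) (monoid.mult (Cstar R S \<iota>)).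
               \<forall>c\<in>F. coring_eval S \<psi> c = coring_eval S \<phi> c))
       \<and> (\<forall>(M1 :: 'a ring) a1 (M2 :: 'b ring) a2 (M3 :: 'c ring) a3 f g.
            right_Cstar_module R S \<iota> M1 a1 \<and> right_Cstar_module R S \<iota> M2 a2 \<and>
            right_Cstar_module R S \<iota> M3 a3 \<and>
            Cstar_mod_hom R S \<iota> M1 a1 M2 a2 f \<and> Cstar_mod_hom R S \<iota> M2 a2 M3 a3 g \<and>
            inj_on f (carrier M1) \<and>
            f ` carrier M1 = {y \<in> carrier M2. g y = \<zero>\<^bsub>M3\<^esub>} \<and>
            g ` carrier M2 = carrier M3
            \<longrightarrow>
            inj_on f (Rat R S \<iota> M1 a1) \<and>
            f ` Rat R S \<iota> M1 a1 = {y \<in> Rat R S \<iota> M2 a2. g y = \<zero>\<^bsub>M3\<^esub>} \<and>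
            g ` Rat R S \<iota> M2 a2 = Rat R S \<iota> M3 a3)"
proof -
  interpret sweedler_setting R S \<iota>
    using assms(1-3) by (simp add: sweedler_setting_def sweedler_setting_axioms_def)
  show ?thesis
  proof (rule conjI; intro ballI allI impI)
    fix \<phi> F assume "\<phi> \<in> carrier C" "finite F \<and> (\<forall>c\<in>F. sweedler_elem S c)"
    then show "\<exists>\<psi>\<in>Rat R S \<iota> C (monoid.mult C). \<forall>c\<in>F. coring_eval S \<psi> c = coring_eval S \<phi> c"
      by (elim conjE) (rule Rat_Cstar_dense[OF assms(4)])
  next
    fix M1 :: "'a ring" and a1 and M2 :: "'b ring" and a2 and M3 :: "'c ring" and a3 and f g
    assume "right_Cstar_module R S \<iota> M1 a1 \<and> right_Cstar_module R S \<iota> M2 a2 \<and>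
      right_Cstar_module R S \<iota> M3 a3 \<and>
      Cstar_mod_hom R S \<iota> M1 a1 M2 a2 f \<and> Cstar_mod_hom R S \<iota> M2 a2 M3 a3 g \<and>
      inj_on f (carrier M1) \<and> f ` carrier M1 = {y \<in> carrier M2. g y = \<zero>\<^bsub>M3\<^esub>} \<and>
      g ` carrier M2 = carrier M3"
    then show "inj_on f (Rat R S \<iota> M1 a1) \<and>
      f ` Rat R S \<iota> M1 a1 = {y \<in> Rat R S \<iota> M2 a2. g y = \<zero>\<^bsub>M3\<^esub>} \<and>
      g ` Rat R S \<iota> M2 a2 = Rat R S \<iota> M3 a3"
      by (elim conjE) (intro conjI; rule Rat_exact[OF assms(4)]; assumption)
  qed
qed

end
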